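(* Let $s>1$ be an integer and $k\in\{1,2,\ldots,s-1\}$. Then the indexed family $\{A_\varepsilon\colon \varepsilon\in I^s,\ |\varepsilon|=k\}$ defines a partition of $I^{s-1}$; that is, the union of its members is $I^{s-1}$ and $A_\varepsilon\cap A_\gamma=\emptyset$ whenever $\varepsilon\neq\gamma$ (the empty set is allowed as a member).
   Context: Let $I=\{0,1\}$ and for $\varepsilon\in I^s$ let $|\varepsilon|=\sum_i\varepsilon_i$. Let $\alpha=(0,\ldots,0)$ and $\omega=(1,\ldots,1)$ in $I^s$. For $\varepsilon\in I^s\setminus\{\alpha,\omega\}$ there is a unique index $i=t(\varepsilon)\in\{1,\ldots,s-1\}$ with $\varepsilon_i\neq\varepsilon_{i+1}=\varepsilon_{i+2}=\cdots=\varepsilon_s$, and one sets $A_\varepsilon=\{\varepsilon_1\}\times\cdots\times\{\varepsilon_i\}\times I^{s-1-i}\subseteq I^{s-1}$. (Note that if $1\leqslant|\varepsilon|\leqslant s-1$ then $\varepsilon\notin\{\alpha,\omega\}$.) *)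

theory Defs
  imports Main
begin

text \<open>Elements of I^s are lists of length s with entries in {0,1};
  the (1-based) coordinate eps_i is the list entry eps ! (i - 1).\<close>

definition cube :: "nat \<Rightarrow> nat list set" where
  "cube s = {xs. length xs = s \<and> set xs \<subseteq> {0, 1}}"

definition weight :: "nat list \<Rightarrow> nat" where
  "weight e = sum_list e"

definition coord :: "nat list \<Rightarrow> nat \<Rightarrow> nat" where
  "coord e i = e ! (i - 1)"

definition tidx :: "nat list \<Rightarrow> nat" where
  "tidx e = (THE i. 1 \<le> i \<and> i \<le> length e - 1 \<and> coord e i \<noteq> coord e (i + 1) \<and>
               (\<forall>j. i + 1 \<le> j \<and> j \<le> length e \<longrightarrow> coord e j = coord e (length e)))"

definition Aset :: "nat list \<Rightarrow> nat list set" where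
  "Aset e = {x \<in> cube (length e - 1). \<forall>j. 1 \<le> j \<and> j \<le> tidx e \<longrightarrow> coord x j = coord e j}"

end

theory Submission
  imports Defs
begin

text \<open>For x in I^(s-1) and i in {1..s-1}, the only eps with t(eps) = i and x in A_eps is
  x_1 ... x_i followed by s - i copies of 1 - x_i. Its weight is
  S_i + (s - i)(1 - x_i) with S_i = x_1 + ... + x_i, and as a function of i this weight is
  injective with values in {1..s-1}, hence a bijection of {1..s-1}.\<close>

definition last_switch :: "nat list \<Rightarrow> nat \<Rightarrow> bool" where
  "last_switch e i \<longleftrightarrow> 1 \<le> i \<and> i \<le> length e - 1 \<and> coord e i \<noteq> coord e (i + 1) \<and>
     (\<forall>j. i + 1 \<le> j \<and> j \<le> length e \<longrightarrow> coord e j = coord e (length e))"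

lemma last_switchD:
  assumes "last_switch e i"
  shows "1 \<le> i" and "i < length e" and "coord e i \<noteq> coord e (i + 1)"
    and "\<And>j. i < j \<Longrightarrow> j \<le> length e \<Longrightarrow> coord e j = coord e (length e)"
proof -
  have "1 \<le> i \<and> i \<le> length e - 1" and "coord e i \<noteq> coord e (i + 1)"
    and tail: "\<forall>j. i + 1 \<le> j \<and> j \<le> length e \<longrightarrow> coord e j = coord e (length e)"
    using assms unfolding last_switch_def by blast+
  then show "1 \<le> i" "i < length e" "coord e i \<noteq> coord e (i + 1)"
    by linarith+
  show "coord e j = coord e (length e)" if "i < j" "j \<le> length e" for j
    using tail[rule_format, of j] that by simp
qed

lemma last_switch_unique:
  assumes "last_switch e i" and "last_switch e i'"
  shows "i = i'"
proof -
  have False if a: "last_switch e a" and b: "last_switch e b" and "a < b" for a b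
  proof -
    have "coord e b = coord e (length e)" "coord e (b + 1) = coord e (length e)"
      using last_switchD(4)[OF a, of b] last_switchD(4)[OF a, of "b + 1"]
        last_switchD(2)[OF b] \<open>a < b\<close> by simp_all
    with last_switchD(3)[OF b] show False
      by simp
  qed
  then show ?thesis
    using assms by (metis linorder_neqE_nat)
qed

lemma tidx_eqI: "last_switch e i \<Longrightarrow> tidx e = i"
proof -
  assume "last_switch e i"
  have "tidx e = (THE i. last_switch e i)"
    unfolding tidx_def last_switch_def ..
  then show ?thesis
    using \<open>last_switch e i\<close> by (metis the_equality last_switch_unique)
qed

lemma cube_entry_le_1: "x \<in> cube s \<Longrightarrow> y \<in> set x \<Longrightarrow> y \<le> 1"
  unfolding cube_def by auto

lemma cube_nth_le_1: "x \<in> cube s \<Longrightarrow> n < s \<Longrightarrow> x ! n \<le> 1"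
  using cube_entry_le_1 nth_mem unfolding cube_def by blast

lemma exists_coord_neq_last:
  assumes e: "e \<in> cube s" and "1 \<le> weight e" and "weight e \<le> s - 1"
  shows "\<exists>j\<in>{1..s-1}. coord e j \<noteq> coord e s"
proof (rule ccontr)
  assume const: "\<not> ?thesis"
  have len: "length e = s"
    using e by (simp add: cube_def)
  have "e = replicate s (coord e s)"
  proof (rule replicate_eqI)
    fix y
    assume "y \<in> set e"
    then obtain n where "n < s" "y = coord e (Suc n)"
      using len by (auto simp: in_set_conv_nth coord_def)
    then show "y = coord e s"
      using const by (cases "Suc n = s") auto
  qed (fact len)
  then have "weight e = s * coord e s"
    by (metis sum_list_replicate weight_def of_nat_id mult.commute)
  moreover have "coord e s \<le> 1"
    using cube_nth_le_1[OF e] assms by (simp add: coord_def)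
  ultimately show False
    using assms by (cases "coord e s") auto
qed

lemma last_switch_exists:
  assumes "j \<in> {1..length e - 1}" and "coord e j \<noteq> coord e (length e)"
  shows "\<exists>i. last_switch e i"
proof -
  define M where "M = {j \<in> {1..length e - 1}. coord e j \<noteq> coord e (length e)}"
  have "finite M" "M \<noteq> {}"
    using assms unfolding M_def by auto
  define i where "i = Max M"
  have "i \<in> M"
    unfolding i_def using Max_in \<open>finite M\<close> \<open>M \<noteq> {}\<close> .
  have tail: "coord e l = coord e (length e)" if "i < l" "l \<le> length e" for l
  proof (rule ccontr)
    assume "coord e l \<noteq> coord e (length e)"
    then have "l \<in> M"
      using that \<open>i \<in> M\<close> unfolding M_def by (cases "l = length e") auto
    then show False
      using that Max_ge[OF \<open>finite M\<close>] unfolding i_def by fastforce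
  qed
  have "1 \<le> i" "i \<le> length e - 1" "coord e i \<noteq> coord e (length e)"
    using \<open>i \<in> M\<close> unfolding M_def by auto
  moreover have "coord e (i + 1) = coord e (length e)"
    using tail[of "i + 1"] calculation(1,2) by simp
  ultimately have "last_switch e i"
    unfolding last_switch_def using tail by (metis Suc_eq_plus1 Suc_le_eq)
  then show ?thesis ..
qed

definition flip_tail :: "nat \<Rightarrow> nat list \<Rightarrow> nat \<Rightarrow> nat list" where
  "flip_tail s x i = take i x @ replicate (s - i) (1 - x ! (i - 1))"

lemma coord_flip_tail:
  assumes "length x = s - 1" and "i \<le> s - 1" and "1 \<le> j" and "j \<le> s"
  shows "coord (flip_tail s x i) j = (if j \<le> i then coord x j else 1 - coord x i)"
  using assms by (auto simp: flip_tail_def coord_def nth_append)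

lemma flip_tail_in_cube:
  assumes x: "x \<in> cube (s - 1)" and "1 \<le> i" and "i \<le> s - 1"
  shows "flip_tail s x i \<in> cube s"
proof -
  have "set (take i x) \<subseteq> {0, 1}"
    using x set_take_subset[of i x] unfolding cube_def by blast
  moreover have "1 - x ! (i - 1) \<in> {0, 1}"
    using cube_nth_le_1[OF x, of "i - 1"] assms by auto
  ultimately show ?thesis
    using x assms by (auto simp: cube_def flip_tail_def)
qed

lemma last_switch_flip_tail:
  assumes x: "x \<in> cube (s - 1)" and "1 \<le> i" and "i \<le> s - 1"
  shows "last_switch (flip_tail s x i) i"
proof -
  have len: "length x = s - 1" "length (flip_tail s x i) = s"
    using x assms by (auto simp: cube_def flip_tail_def)
  have "coord x i \<le> 1"
    using cube_nth_le_1[OF x, of "i - 1"] assms by (simp add: coord_def)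
  then have "coord x i \<noteq> 1 - coord x i"
    by arith
  then show ?thesis
    using assms len by (auto simp: last_switch_def coord_flip_tail)
qed

lemma mem_Aset_flip_tail:
  assumes x: "x \<in> cube (s - 1)" and "1 \<le> i" and "i \<le> s - 1"
  shows "x \<in> Aset (flip_tail s x i)"
proof -
  have "length x = s - 1" "length (flip_tail s x i) = s"
    using x assms by (auto simp: cube_def flip_tail_def)
  then show ?thesis
    using x assms
    by (auto simp: Aset_def tidx_eqI[OF last_switch_flip_tail[OF assms]] coord_flip_tail)
qed

lemma eq_flip_tail_if_mem_Aset:
  assumes e: "e \<in> cube s" and sw: "last_switch e i" and xA: "x \<in> Aset e"
  shows "e = flip_tail s x i"
proof -
  have len: "length e = s"
    using e by (simp add: cube_def)
  note tail = last_switchD(4)[OF sw, unfolded len]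
  have i: "1 \<le> i" "i < s"
    using last_switchD(1,2)[OF sw] len by auto
  have x: "x \<in> cube (s - 1)" and head: "\<And>j. 1 \<le> j \<Longrightarrow> j \<le> i \<Longrightarrow> coord x j = coord e j"
    using xA unfolding Aset_def tidx_eqI[OF sw] len by auto
  have "coord e i \<le> 1" "coord e (i + 1) \<le> 1"
    using cube_nth_le_1[OF e] i by (auto simp: coord_def)
  then have flipped: "coord e (i + 1) = 1 - coord x i"
    using last_switchD(3)[OF sw] head[of i] i by auto
  have "coord e j = coord (flip_tail s x i) j" if "1 \<le> j" "j \<le> s" for j
  proof (cases "j \<le> i")
    case True
    then show ?thesis
      using that i head[of j] x by (simp add: coord_flip_tail cube_def)
  next
    case False
    then have "coord e j = coord e (i + 1)"
      using that i tail[of j] tail[of "i + 1"] by simp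
    then show ?thesis
      using False that i flipped x by (simp add: coord_flip_tail cube_def)
  qed
  from this[of "Suc n" for n] have "e ! n = flip_tail s x i ! n" if "n < s" for n
    using that by (simp add: coord_def)
  then show ?thesis
    using len i x by (intro nth_equalityI) (auto simp: flip_tail_def cube_def)
qed

lemma mem_Aset_imp_eq_flip_tail:
  assumes e: "e \<in> cube s" and "1 \<le> weight e" and "weight e \<le> s - 1" and xA: "x \<in> Aset e"
  shows "\<exists>i\<in>{1..s-1}. e = flip_tail s x i"
proof -
  have len: "length e = s"
    using e by (simp add: cube_def)
  then obtain i where sw: "last_switch e i"
    using exists_coord_neq_last[OF assms(1-3)] last_switch_exists by metis
  then have "i \<in> {1..s-1}"
    using last_switchD(1,2)[OF sw] len by simp
  with eq_flip_tail_if_mem_Aset[OF e sw xA] show ?thesis ..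
qed

lemma weight_flip_tail:
  "weight (flip_tail s x i) = sum_list (take i x) + (s - i) * (1 - x ! (i - 1))"
  by (simp add: weight_def flip_tail_def sum_list_replicate)

lemma sum_list_take_mono:
  fixes xs :: "nat list"
  assumes "i \<le> j"
  shows "sum_list (take i xs) \<le> sum_list (take j xs)"
  using take_add[of i "j - i" xs] assms by simp

lemma sum_list_le_length:
  fixes xs :: "nat list"
  shows "(\<And>y. y \<in> set xs \<Longrightarrow> y \<le> 1) \<Longrightarrow> sum_list xs \<le> length xs"
  by (induction xs) fastforce+

lemma sum_list_take_le_add:
  fixes xs :: "nat list"
  assumes "\<And>y. y \<in> set xs \<Longrightarrow> y \<le> 1" and "i \<le> j"
  shows "sum_list (take j xs) \<le> sum_list (take i xs) + (j - i)"
proof -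
  have "sum_list (take (j - i) (drop i xs)) \<le> length (take (j - i) (drop i xs))"
    using assms(1) by (intro sum_list_le_length) (meson in_set_dropD in_set_takeD)
  then show ?thesis
    using take_add[of i "j - i" xs] assms(2) by (simp, linarith)
qed

lemma sum_list_take_nth:
  "1 \<le> i \<Longrightarrow> i \<le> length xs \<Longrightarrow> sum_list (take i xs) = sum_list (take (i - 1) xs) + xs ! (i - 1)"
  using take_Suc_conv_app_nth[of "i - 1" xs] by simp

lemma weight_flip_tail_range:
  assumes x: "x \<in> cube (s - 1)" and "1 \<le> i" and "i \<le> s - 1"
  shows "weight (flip_tail s x i) \<in> {1..s-1}"
proof -
  have "sum_list (take i x) = sum_list (take (i - 1) x) + x ! (i - 1)"
    using assms x by (intro sum_list_take_nth) (auto simp: cube_def)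
  moreover have "sum_list (take (i - 1) x) \<le> i - 1"
    using sum_list_take_le_add[of x 0 "i - 1"] cube_entry_le_1[OF x] by simp
  moreover have "x ! (i - 1) \<le> 1"
    using cube_nth_le_1[OF x] assms by simp
  ultimately show ?thesis
    using assms by (cases "x ! (i - 1)") (auto simp: weight_flip_tail)
qed

lemma weight_flip_tail_neq:
  assumes x: "x \<in> cube (s - 1)" and "1 \<le> i" and "i < j" and "j \<le> s - 1"
  shows "weight (flip_tail s x i) \<noteq> weight (flip_tail s x j)"
proof -
  have "sum_list (take j x) = sum_list (take (j - 1) x) + x ! (j - 1)"
    using assms x by (intro sum_list_take_nth) (auto simp: cube_def)
  moreover have "sum_list (take i x) \<le> sum_list (take (j - 1) x)"
    using assms by (intro sum_list_take_mono) simp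
  moreover have "sum_list (take (j - 1) x) \<le> sum_list (take i x) + (j - 1 - i)"
    using cube_entry_le_1[OF x] assms by (intro sum_list_take_le_add) auto
  moreover have "x ! (i - 1) \<le> 1" "x ! (j - 1) \<le> 1"
    using cube_nth_le_1[OF x] assms by auto
  ultimately show ?thesis
    using assms by (cases "x ! (i - 1)"; cases "x ! (j - 1)") (auto simp: weight_flip_tail)
qed

lemma bij_betw_weight_flip_tail:
  assumes x: "x \<in> cube (s - 1)"
  shows "bij_betw (\<lambda>i. weight (flip_tail s x i)) {1..s-1} {1..s-1}"
proof -
  have inj: "inj_on (\<lambda>i. weight (flip_tail s x i)) {1..s-1}"
    using weight_flip_tail_neq[OF x] by (intro inj_onI) (metis atLeastAtMost_iff linorder_neqE_nat)
  moreover have "(\<lambda>i. weight (flip_tail s x i)) ` {1..s-1} \<subseteq> {1..s-1}"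
    using weight_flip_tail_range[OF x] by auto
  ultimately show ?thesis
    unfolding bij_betw_def by (simp add: endo_inj_surj)
qed

lemma exists_weight_mem_Aset:
  assumes x: "x \<in> cube (s - 1)" and "k \<in> {1..s-1}"
  shows "\<exists>e\<in>cube s. weight e = k \<and> x \<in> Aset e"
proof -
  obtain i where "i \<in> {1..s-1}" "weight (flip_tail s x i) = k"
    using bij_betw_imp_surj_on[OF bij_betw_weight_flip_tail[OF x]] assms(2) by (metis imageE)
  then show ?thesis
    using mem_Aset_flip_tail[OF x] flip_tail_in_cube[OF x] by auto
qed

lemma eq_if_weight_eq_mem_Aset:
  assumes e: "e \<in> cube s" and g: "g \<in> cube s" and "weight e = weight g"
    and "1 \<le> weight e" and "weight e \<le> s - 1"
    and xe: "x \<in> Aset e" and xg: "x \<in> Aset g"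
  shows "e = g"
proof -
  have x: "x \<in> cube (s - 1)"
    using xe e by (auto simp: Aset_def cube_def)
  obtain i where i: "i \<in> {1..s-1}" "e = flip_tail s x i"
    using mem_Aset_imp_eq_flip_tail[OF e _ _ xe] assms(4,5) by blast
  obtain j where j: "j \<in> {1..s-1}" "g = flip_tail s x j"
    using mem_Aset_imp_eq_flip_tail[OF g _ _ xg] assms(3-5) by auto
  have "i = j"
    using bij_betw_imp_inj_on[OF bij_betw_weight_flip_tail[OF x]] i j \<open>weight e = weight g\<close>
    by (auto dest: inj_onD)
  with i j show ?thesis
    by simp
qed

theorem lemma1:
  fixes s k :: nat
  assumes "s > 1" and "1 \<le> k" and "k \<le> s - 1"
  shows "(\<Union>e\<in>{e \<in> cube s. weight e = k}. Aset e) = cube (s - 1)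
    \<and> (\<forall>e\<in>{e \<in> cube s. weight e = k}. \<forall>g\<in>{e \<in> cube s. weight e = k}.
          e \<noteq> g \<longrightarrow> Aset e \<inter> Aset g = {})"
proof (intro conjI)
  have "Aset e \<subseteq> cube (s - 1)" if "e \<in> cube s" for e
    using that by (auto simp: Aset_def cube_def)
  moreover have "x \<in> (\<Union>e\<in>{e \<in> cube s. weight e = k}. Aset e)" if "x \<in> cube (s - 1)" for x
    using exists_weight_mem_Aset[OF that] assms by auto
  ultimately show "(\<Union>e\<in>{e \<in> cube s. weight e = k}. Aset e) = cube (s - 1)"
    by blast
  show "\<forall>e\<in>{e \<in> cube s. weight e = k}. \<forall>g\<in>{e \<in> cube s. weight e = k}.
          e \<noteq> g \<longrightarrow> Aset e \<inter> Aset g = {}"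
    using eq_if_weight_eq_mem_Aset assms by (auto 0 3)
qed

end
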